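(* In the standing setting, suppose $G$ is the series or parallel composition of SP digraphs $G_1$ and $G_2$, and suppose a robust $\boldsymbol b$-flow exists. Then there exists an optimal robust $\boldsymbol b$-flow $\boldsymbol f=(f^1,f^2)$ with $\delta(f^2|G_1)\ge\delta(f^1|G_1)$ and $\delta(f^2|G_2)\ge\delta(f^1|G_2)$.
   Context: A RobMCF instance $(G,u,c,\boldsymbol b)$ consists of a finite directed graph (parallel arcs allowed) $G=(V,A)$ whose arc set is partitioned as $A=A^{\mathrm{fix}}\cup A^{\mathrm{free}}$ into fixed and free arcs, capacities $u:A\to\mathbb Z_{\ge0}$, costs $c:A\to\mathbb Z_{\ge0}$, a finite nonempty set of scenarios $\Lambda$, and balances $b^\lambda:V\to\mathbb Z$ with $\sum_{v}b^\lambda(v)=0$. A $b^\lambda$-flow is a function $f^\lambda:A\to\mathbb Z_{\ge0}$ with $f^\lambda(a)\le u(a)$ for all $a$ and $\sum_{a=(v,w)\in A}f^\lambda(a)-\sum_{a=(w,v)\in A}f^\lambda(a)=b^\lambda(v)$ for all $v\in V$; its cost is $c(f^\lambda)=\sum_a c(a)f^\lambda(a)$. A robust $\boldsymbol b$-flow is a tuple $(f^\lambda)_{\lambda\in\Lambda}$ of $b^\lambda$-flows with $f^\lambda(a)=f^{\lambda'}(a)$ for all $a\in A^{\mathrm{fix}}$, $\lambda,\lambda'\in\Lambda$; its cost is $\max_\lambda c(f^\lambda)$; it is optimal if of minimum cost. Series-parallel (SP) digraphs are defined recursively: a single arc $(o,q)$ is an SP digraph with origin $o$ and target $q$; if $G_1$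 (origin $o_1$, target $q_1$) and $G_2$ (origin $o_2$, target $q_2$) are SP digraphs, then their series composition (identify $q_1$ with $o_2$; origin $o_1$, target $q_2$) and their parallel composition (identify $o_1$ with $o_2$ to form the origin and $q_1$ with $q_2$ to form the target) are SP digraphs. Standing setting: $G$ is an SP digraph with origin $o$ and target $q$, $\Lambda=\{1,2\}$, and there are integers $0\le d^1\le d^2$ with $b^\lambda(o)=d^\lambda$, $b^\lambda(q)=-d^\lambda$ and $b^\lambda(v)=0$ for all other $v$ (unique source $o$, unique sink $q$). For an SP subgraph $H$ of $G$ with origin $o_H$ and a flow $f^\lambda$, write $\delta(f^\lambda|H)=\sum_{a=(o_H,w)\in A(H)}f^\lambda(a)$ for the flow value entering $H$. *)

theory Defs
  imports Main
begin

text \<open>A digraph with parallel arcs: arcs of type 'a, each arc e has tail tail e and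
head head e. A (sub)graph is given by its finite arc set; its vertex set consists
of the endpoints of its arcs (SP digraphs have no isolated vertices).\<close>

definition verts :: "('a \<Rightarrow> 'v) \<Rightarrow> ('a \<Rightarrow> 'v) \<Rightarrow> 'a set \<Rightarrow> 'v set" where
  "verts tail head A = tail ` A \<union> head ` A"

definition series_comp ::
  "('a \<Rightarrow> 'v) \<Rightarrow> ('a \<Rightarrow> 'v) \<Rightarrow> 'a set \<Rightarrow> 'v \<Rightarrow> 'v \<Rightarrow> 'a set \<Rightarrow> 'v \<Rightarrow> 'v \<Rightarrow> bool" where
  "series_comp tail head A1 s1 t1 A2 s2 t2 \<longleftrightarrow>
     t1 = s2 \<and> A1 \<inter> A2 = {} \<and> verts tail head A1 \<inter> verts tail head A2 = {t1}"

definition parallel_comp ::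
  "('a \<Rightarrow> 'v) \<Rightarrow> ('a \<Rightarrow> 'v) \<Rightarrow> 'a set \<Rightarrow> 'v \<Rightarrow> 'v \<Rightarrow> 'a set \<Rightarrow> 'v \<Rightarrow> 'v \<Rightarrow> bool" where
  "parallel_comp tail head A1 s1 t1 A2 s2 t2 \<longleftrightarrow>
     s1 = s2 \<and> t1 = t2 \<and> A1 \<inter> A2 = {} \<and> verts tail head A1 \<inter> verts tail head A2 = {s1, t1}"

inductive sp :: "('a \<Rightarrow> 'v) \<Rightarrow> ('a \<Rightarrow> 'v) \<Rightarrow> 'a set \<Rightarrow> 'v \<Rightarrow> 'v \<Rightarrow> bool"
  for tail head where
  arc: "tail e = s \<Longrightarrow> head e = t \<Longrightarrow> s \<noteq> t \<Longrightarrow> sp tail head {e} s t"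
| ser: "sp tail head A1 s1 t1 \<Longrightarrow> sp tail head A2 s2 t2 \<Longrightarrow> series_comp tail head A1 s1 t1 A2 s2 t2
        \<Longrightarrow> sp tail head (A1 \<union> A2) s1 t2"
| par: "sp tail head A1 s1 t1 \<Longrightarrow> sp tail head A2 s2 t2 \<Longrightarrow> parallel_comp tail head A1 s1 t1 A2 s2 t2
        \<Longrightarrow> sp tail head (A1 \<union> A2) s1 t1"

definition st_balance :: "'v \<Rightarrow> 'v \<Rightarrow> nat \<Rightarrow> 'v \<Rightarrow> int" where
  "st_balance s t d v = (if v = s then int d else if v = t then - int d else 0)"

definition is_flow ::
  "('a \<Rightarrow> 'v) \<Rightarrow> ('a \<Rightarrow> 'v) \<Rightarrow> 'a set \<Rightarrow> ('a \<Rightarrow> nat) \<Rightarrow> ('v \<Rightarrow> int) \<Rightarrow> ('a \<Rightarrow> nat) \<Rightarrow> bool" where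
  "is_flow tail head A u b f \<longleftrightarrow>
     (\<forall>e\<in>A. f e \<le> u e) \<and>
     (\<forall>v\<in>verts tail head A.
        (\<Sum>e\<in>{e\<in>A. tail e = v}. int (f e)) - (\<Sum>e\<in>{e\<in>A. head e = v}. int (f e)) = b v)"

definition flow_cost :: "'a set \<Rightarrow> ('a \<Rightarrow> nat) \<Rightarrow> ('a \<Rightarrow> nat) \<Rightarrow> nat" where
  "flow_cost A c f = (\<Sum>e\<in>A. c e * f e)"

definition robust_flow ::
  "('a \<Rightarrow> 'v) \<Rightarrow> ('a \<Rightarrow> 'v) \<Rightarrow> 'a set \<Rightarrow> 'a set \<Rightarrow> ('a \<Rightarrow> nat) \<Rightarrow> 'v \<Rightarrow> 'v \<Rightarrow> nat \<Rightarrow> nat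
   \<Rightarrow> ('a \<Rightarrow> nat) \<Rightarrow> ('a \<Rightarrow> nat) \<Rightarrow> bool" where
  "robust_flow tail head A Afix u s t d1 d2 f1 f2 \<longleftrightarrow>
     is_flow tail head A u (st_balance s t d1) f1 \<and>
     is_flow tail head A u (st_balance s t d2) f2 \<and>
     (\<forall>e\<in>Afix. f1 e = f2 e)"

definition robust_cost :: "'a set \<Rightarrow> ('a \<Rightarrow> nat) \<Rightarrow> ('a \<Rightarrow> nat) \<Rightarrow> ('a \<Rightarrow> nat) \<Rightarrow> nat" where
  "robust_cost A c f1 f2 = max (flow_cost A c f1) (flow_cost A c f2)"

definition optimal_robust_flow ::
  "('a \<Rightarrow> 'v) \<Rightarrow> ('a \<Rightarrow> 'v) \<Rightarrow> 'a set \<Rightarrow> 'a set \<Rightarrow> ('a \<Rightarrow> nat) \<Rightarrow> ('a \<Rightarrow> nat) \<Rightarrow> 'v \<Rightarrow> 'v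
   \<Rightarrow> nat \<Rightarrow> nat \<Rightarrow> ('a \<Rightarrow> nat) \<Rightarrow> ('a \<Rightarrow> nat) \<Rightarrow> bool" where
  "optimal_robust_flow tail head A Afix u c s t d1 d2 f1 f2 \<longleftrightarrow>
     robust_flow tail head A Afix u s t d1 d2 f1 f2 \<and>
     (\<forall>g1 g2. robust_flow tail head A Afix u s t d1 d2 g1 g2 \<longrightarrow>
        robust_cost A c f1 f2 \<le> robust_cost A c g1 g2)"

definition delta :: "('a \<Rightarrow> 'v) \<Rightarrow> 'a set \<Rightarrow> 'v \<Rightarrow> ('a \<Rightarrow> nat) \<Rightarrow> nat" where
  "delta tail H sH f = (\<Sum>e\<in>{e\<in>H. tail e = sH}. f e)"

end

theory Submission
  imports Defs
begin

text \<open>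
  In a series composition every s-t flow sends its whole value through both parts, so every
  optimal robust flow already has the property. In a parallel composition, suppose scenario 2
  sends less through G1 than scenario 1. SP digraphs have an intermediate value property: between
  two conserving flows lies, arc by arc, a conserving flow of any intermediate value. On G2 pick
  such a flow \<chi> between f1 and f2 whose value makes f1 on G1 plus \<chi> on G2 a flow for d2; its
  complement f1 + f2 - \<chi> then makes f2 on G1 plus the complement a flow for d1. Both agree with
  f1 = f2 on fixed arcs, and their costs on G2 add up to those of f1 and f2, so one of the two
  exchanges does not increase the robust cost, and either one yields the monotone split.
\<close>

lemma sp_wellformed:
  "sp tail head H s t \<Longrightarrow> finite H \<and> s \<noteq> t \<and> s \<in> verts tail head H \<and> t \<in> verts tail head H
     \<and> (\<forall>e\<in>H. head e \<noteq> s) \<and> (\<forall>e\<in>H. tail e \<noteq> t)"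
proof (induction rule: sp.induct)
  case (arc e s t)
  then show ?case by (auto simp: verts_def)
next
  case (ser H1 s1 t1 H2 s2 t2)
  then have common: "verts tail head H1 \<inter> verts tail head H2 = {t1}" "s2 = t1"
    by (auto simp: series_comp_def)
  have "s1 \<notin> verts tail head H2" "t2 \<notin> verts tail head H1" "s1 \<noteq> t2"
    using ser.IH common by auto
  then have "\<forall>e\<in>H2. head e \<noteq> s1" "\<forall>e\<in>H1. tail e \<noteq> t2"
    by (auto simp: verts_def)
  with ser.IH \<open>s1 \<noteq> t2\<close> show ?case by (auto simp: verts_def)
next
  case (par H1 s1 t1 H2 s2 t2)
  then have "s2 = s1" "t2 = t1" by (simp_all add: parallel_comp_def)
  with par.IH show ?case by (auto simp: verts_def)
qed

lemma delta_eq_0: "(\<And>e. e \<in> H \<Longrightarrow> g e \<noteq> v) \<Longrightarrow> delta g H v f = 0"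
  unfolding delta_def by (rule sum.neutral) auto

lemma
  assumes "sp tail head H s t"
  shows sp_finite: "finite H"
    and sp_origin_ne_target: "s \<noteq> t"
    and sp_origin_in_verts: "s \<in> verts tail head H"
    and sp_target_in_verts: "t \<in> verts tail head H"
    and sp_inflow_origin: "delta head H s f = 0"
    and sp_outflow_target: "delta tail H t f = 0"
  using sp_wellformed[OF assms] by (auto intro: delta_eq_0)

lemma delta_cong: "(\<And>e. e \<in> H \<Longrightarrow> f e = f' e) \<Longrightarrow> delta g H v f = delta g H v f'"
  unfolding delta_def by (rule sum.cong) auto

lemma delta_add: "delta g H v (\<lambda>e. f e + f' e) = delta g H v f + delta g H v f'"
  unfolding delta_def by (rule sum.distrib)

lemma delta_add_eq:
  "(\<And>e. e \<in> H \<Longrightarrow> f e + f' e = h e + h' e) \<Longrightarrow>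
   delta g H v f + delta g H v f' = delta g H v h + delta g H v h'"
  by (simp add: delta_add[symmetric] cong: delta_cong)

lemma delta_Un:
  "finite H1 \<Longrightarrow> finite H2 \<Longrightarrow> H1 \<inter> H2 = {} \<Longrightarrow>
   delta g (H1 \<union> H2) v f = delta g H1 v f + delta g H2 v f"
  unfolding delta_def by (subst sum.union_disjoint[symmetric]) (auto intro: sum.cong)

lemma delta_Un_eq_left:
  "(\<And>e. e \<in> H2 \<Longrightarrow> g e \<noteq> v) \<Longrightarrow> delta g (H1 \<union> H2) v f = delta g H1 v f"
  unfolding delta_def by (rule arg_cong[where f = "sum f"]) auto

lemma delta_Un_eq_right:
  "(\<And>e. e \<in> H1 \<Longrightarrow> g e \<noteq> v) \<Longrightarrow> delta g (H1 \<union> H2) v f = delta g H2 v f"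
  using delta_Un_eq_left[of H1 g v H2 f] by (simp add: Un_commute)

lemma delta_override_on_in: "delta g H v (override_on f f' H) = delta g H v f'"
  by (rule delta_cong) simp

lemma delta_override_on_out:
  "H1 \<inter> H2 = {} \<Longrightarrow> delta g H1 v (override_on f f' H2) = delta g H1 v f"
  by (rule delta_cong) (auto simp: override_on_def)

lemma int_delta: "int (delta g H v f) = (\<Sum>e\<in>{e\<in>H. g e = v}. int (f e))"
  by (simp add: delta_def)

lemma verts_Un: "verts tail head (H1 \<union> H2) = verts tail head H1 \<union> verts tail head H2"
  unfolding verts_def by auto

text \<open>Applied to the head map instead of the tail map, delta measures the inflow into a vertex.\<close>

definition conserving :: "('a \<Rightarrow> 'v) \<Rightarrow> ('a \<Rightarrow> 'v) \<Rightarrow> 'a set \<Rightarrow> 'v \<Rightarrow> 'v \<Rightarrow> ('a \<Rightarrow> nat) \<Rightarrow> bool" where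
  "conserving tail head H s t f \<longleftrightarrow>
     (\<forall>v \<in> verts tail head H - {s, t}. delta tail H v f = delta head H v f)"

lemma conserving_cong:
  "(\<And>e. e \<in> H \<Longrightarrow> f e = f' e) \<Longrightarrow> conserving tail head H s t f = conserving tail head H s t f'"
  unfolding conserving_def by (simp cong: delta_cong)

lemma delta_Un_notin_verts:
  assumes "v \<notin> verts tail head H2"
  shows "delta tail (H1 \<union> H2) v f = delta tail H1 v f"
    and "delta head (H1 \<union> H2) v f = delta head H1 v f"
    and "delta tail (H2 \<union> H1) v f = delta tail H1 v f"
    and "delta head (H2 \<union> H1) v f = delta head H1 v f"
  using assms by (auto intro!: delta_Un_eq_left delta_Un_eq_right simp: verts_def)

lemma conserving_Un_iff:
  assumes "verts tail head H1 \<inter> verts tail head H2 \<subseteq> {s, t}"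
  shows "conserving tail head (H1 \<union> H2) s t f
     \<longleftrightarrow> conserving tail head H1 s t f \<and> conserving tail head H2 s t f"
proof -
  have "delta tail (H1 \<union> H2) v f = delta head (H1 \<union> H2) v f \<longleftrightarrow> delta tail H1 v f = delta head H1 v f"
    if "v \<in> verts tail head H1 - {s, t}" for v
  proof -
    from that assms have "v \<notin> verts tail head H2" by blast
    then show ?thesis by (simp add: delta_Un_notin_verts)
  qed
  moreover have "delta tail (H1 \<union> H2) v f = delta head (H1 \<union> H2) v f \<longleftrightarrow> delta tail H2 v f = delta head H2 v f"
    if "v \<in> verts tail head H2 - {s, t}" for v
  proof -
    from that assms have "v \<notin> verts tail head H1" by blast
    then show ?thesis by (simp add: delta_Un_notin_verts)
  qed
  ultimately show ?thesis
    unfolding conserving_def verts_Un Un_Diff ball_Un by blast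
qed

lemma series_comp_ends:
  assumes "sp tail head H1 s m" and "sp tail head H2 m t"
    and "series_comp tail head H1 s m H2 m t"
  shows "s \<notin> verts tail head H2" and "t \<notin> verts tail head H1"
  using assms sp_wellformed[OF assms(1)] sp_wellformed[OF assms(2)]
  by (auto simp: series_comp_def)

lemma series_delta_origin:
  assumes "sp tail head H1 s m" and "sp tail head H2 m t"
    and "series_comp tail head H1 s m H2 m t"
  shows "delta tail (H1 \<union> H2) s f = delta tail H1 s f"
  using series_comp_ends(1)[OF assms] by (rule delta_Un_notin_verts)

lemma series_delta_target:
  assumes "sp tail head H1 s m" and "sp tail head H2 m t"
    and "series_comp tail head H1 s m H2 m t"
  shows "delta head (H1 \<union> H2) t f = delta head H2 t f"
  using series_comp_ends(2)[OF assms] by (rule delta_Un_notin_verts)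

lemma conserving_series_iff:
  assumes H1: "sp tail head H1 s m" and H2: "sp tail head H2 m t"
    and sc: "series_comp tail head H1 s m H2 m t"
  shows "conserving tail head (H1 \<union> H2) s t f \<longleftrightarrow>
    conserving tail head H1 s m f \<and> conserving tail head H2 m t f \<and>
    delta tail H2 m f = delta head H1 m f"
proof -
  have common: "verts tail head H1 \<inter> verts tail head H2 = {m}"
    using sc by (simp add: series_comp_def)
  have inner: "verts tail head (H1 \<union> H2) - {s, t} =
      insert m ((verts tail head H1 - {s, m}) \<union> (verts tail head H2 - {m, t}))"
    using common series_comp_ends[OF H1 H2 sc] sp_wellformed[OF H1] sp_wellformed[OF H2]
    by (auto simp: verts_Un)
  have "delta tail (H1 \<union> H2) v f = delta head (H1 \<union> H2) v f \<longleftrightarrow> delta tail H1 v f = delta head H1 v f"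
    if "v \<in> verts tail head H1 - {s, m}" for v
  proof -
    from that common have "v \<notin> verts tail head H2" by blast
    then show ?thesis by (simp add: delta_Un_notin_verts)
  qed
  moreover have "delta tail (H1 \<union> H2) v f = delta head (H1 \<union> H2) v f \<longleftrightarrow> delta tail H2 v f = delta head H2 v f"
    if "v \<in> verts tail head H2 - {m, t}" for v
  proof -
    from that common have "v \<notin> verts tail head H1" by blast
    then show ?thesis by (simp add: delta_Un_notin_verts)
  qed
  moreover have "delta tail (H1 \<union> H2) m f = delta tail H2 m f" "delta head (H1 \<union> H2) m f = delta head H1 m f"
    using sp_wellformed[OF H1] sp_wellformed[OF H2] by (auto intro!: delta_Un_eq_left delta_Un_eq_right)
  ultimately show ?thesis
    unfolding conserving_def inner ball_simps ball_Un by metis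
qed

lemma parallel_comp_facts:
  assumes "parallel_comp tail head H1 s t H2 s t"
  shows "H1 \<inter> H2 = {}" and "verts tail head H1 \<inter> verts tail head H2 \<subseteq> {s, t}"
  using assms by (auto simp: parallel_comp_def)

lemma sp_conserving_inflow_target:
  "sp tail head H s t \<Longrightarrow> conserving tail head H s t f \<Longrightarrow> delta head H t f = delta tail H s f"
proof (induction rule: sp.induct)
  case (arc e s t)
  then have "{x\<in>{e}. head x = t} = {e}" "{x\<in>{e}. tail x = s} = {e}" by auto
  then show ?case by (simp add: delta_def)
next
  case (ser H1 s1 t1 H2 s2 t2)
  then have "s2 = t1" by (simp add: series_comp_def)
  note parts = ser.hyps[unfolded \<open>s2 = t1\<close>]
  note split = ser.prems[unfolded conserving_series_iff[OF parts]]
  have "delta head (H1 \<union> H2) t2 f = delta head H2 t2 f"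
    by (rule series_delta_target[OF parts])
  also have "\<dots> = delta tail H2 t1 f"
    using ser.IH(2) split \<open>s2 = t1\<close> by simp
  also have "\<dots> = delta head H1 t1 f"
    using split by simp
  also have "\<dots> = delta tail H1 s1 f"
    using ser.IH(1) split by simp
  also have "\<dots> = delta tail (H1 \<union> H2) s1 f"
    by (rule series_delta_origin[OF parts, symmetric])
  finally show ?case .
next
  case (par H1 s1 t1 H2 s2 t2)
  then have "s2 = s1" "t2 = t1" by (simp_all add: parallel_comp_def)
  note pc = parallel_comp_facts[OF par.hyps(3)[unfolded \<open>s2 = s1\<close> \<open>t2 = t1\<close>]]
  have fin: "finite H1" "finite H2"
    using par.hyps(1,2) by (simp_all add: sp_finite)
  from par.prems have "conserving tail head H1 s1 t1 f" "conserving tail head H2 s1 t1 f"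
    by (simp_all add: conserving_Un_iff[OF pc(2)])
  with par.IH \<open>s2 = s1\<close> \<open>t2 = t1\<close> show ?case
    by (simp add: delta_Un[OF fin pc(1)])
qed

abbreviation arcwise_between :: "'a set \<Rightarrow> ('a \<Rightarrow> nat) \<Rightarrow> ('a \<Rightarrow> nat) \<Rightarrow> ('a \<Rightarrow> nat) \<Rightarrow> bool" where
  "arcwise_between H \<phi> \<psi> \<chi> \<equiv> \<forall>e\<in>H. min (\<phi> e) (\<psi> e) \<le> \<chi> e \<and> \<chi> e \<le> max (\<phi> e) (\<psi> e)"

definition has_intermediate_flows :: "('a \<Rightarrow> 'v) \<Rightarrow> ('a \<Rightarrow> 'v) \<Rightarrow> 'a set \<Rightarrow> 'v \<Rightarrow> 'v \<Rightarrow> bool" where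
  "has_intermediate_flows tail head H s t \<longleftrightarrow>
     (\<forall>\<phi> \<psi> w. conserving tail head H s t \<phi> \<longrightarrow> conserving tail head H s t \<psi> \<longrightarrow>
        min (delta tail H s \<phi>) (delta tail H s \<psi>) \<le> w \<longrightarrow> w \<le> max (delta tail H s \<phi>) (delta tail H s \<psi>) \<longrightarrow>
        (\<exists>\<chi>. conserving tail head H s t \<chi> \<and> delta tail H s \<chi> = w \<and> arcwise_between H \<phi> \<psi> \<chi>))"

lemma has_intermediate_flowsD:
  assumes "has_intermediate_flows tail head H s t"
    and "conserving tail head H s t \<phi>" and "conserving tail head H s t \<psi>"
    and "min (delta tail H s \<phi>) (delta tail H s \<psi>) \<le> w" and "w \<le> max (delta tail H s \<phi>) (delta tail H s \<psi>)"
  obtains \<chi> where "conserving tail head H s t \<chi>" and "delta tail H s \<chi> = w" and "arcwise_between H \<phi> \<psi> \<chi>"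
  using assms unfolding has_intermediate_flows_def by blast

lemma has_intermediate_flows_arc:
  assumes "tail e = s" "head e = t" "s \<noteq> t"
  shows "has_intermediate_flows tail head {e} s t"
  unfolding has_intermediate_flows_def
proof (intro allI impI)
  fix \<phi> \<psi> w
  assume "min (delta tail {e} s \<phi>) (delta tail {e} s \<psi>) \<le> w"
    and "w \<le> max (delta tail {e} s \<phi>) (delta tail {e} s \<psi>)"
  moreover have "delta tail {e} s f = f e" for f
  proof -
    have "{x \<in> {e}. tail x = s} = {e}" using assms(1) by auto
    then show ?thesis by (simp add: delta_def)
  qed
  moreover have "conserving tail head {e} s t (\<lambda>_. w)"
    using assms by (simp add: conserving_def verts_def)
  ultimately show "\<exists>\<chi>. conserving tail head {e} s t \<chi> \<and> delta tail {e} s \<chi> = w \<and> arcwise_between {e} \<phi> \<psi> \<chi>"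
    by (intro exI[of _ "\<lambda>_. w"]) simp
qed

lemma has_intermediate_flows_series:
  assumes H1: "sp tail head H1 s m" and H2: "sp tail head H2 m t"
    and sc: "series_comp tail head H1 s m H2 m t"
    and IV1: "has_intermediate_flows tail head H1 s m"
    and IV2: "has_intermediate_flows tail head H2 m t"
  shows "has_intermediate_flows tail head (H1 \<union> H2) s t"
  unfolding has_intermediate_flows_def
proof (intro allI impI)
  fix \<phi> \<psi> w
  assume \<phi>: "conserving tail head (H1 \<union> H2) s t \<phi>" and \<psi>: "conserving tail head (H1 \<union> H2) s t \<psi>"
    and w: "min (delta tail (H1 \<union> H2) s \<phi>) (delta tail (H1 \<union> H2) s \<psi>) \<le> w"
      "w \<le> max (delta tail (H1 \<union> H2) s \<phi>) (delta tail (H1 \<union> H2) s \<psi>)"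
  note iff = conserving_series_iff[OF H1 H2 sc]
  note origin = series_delta_origin[OF H1 H2 sc]
  have through: "delta tail H2 m f = delta tail H1 s f" if "conserving tail head (H1 \<union> H2) s t f" for f
    using that sp_conserving_inflow_target[OF H1] by (simp add: iff)
  obtain \<chi>1 where \<chi>1: "conserving tail head H1 s m \<chi>1" "delta tail H1 s \<chi>1 = w" "arcwise_between H1 \<phi> \<psi> \<chi>1"
    using has_intermediate_flowsD[OF IV1, of \<phi> \<psi> w] \<phi> \<psi> w by (auto simp: iff origin)
  obtain \<chi>2 where \<chi>2: "conserving tail head H2 m t \<chi>2" "delta tail H2 m \<chi>2 = w" "arcwise_between H2 \<phi> \<psi> \<chi>2"
    using has_intermediate_flowsD[OF IV2, of \<phi> \<psi> w] \<phi> \<psi> w through[OF \<phi>] through[OF \<psi>]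
    by (auto simp: iff origin)
  define \<chi> where "\<chi> = override_on \<chi>2 \<chi>1 H1"
  have "H1 \<inter> H2 = {}" using sc by (simp add: series_comp_def)
  then have on1: "e \<in> H1 \<Longrightarrow> \<chi> e = \<chi>1 e" and on2: "e \<in> H2 \<Longrightarrow> \<chi> e = \<chi>2 e" for e
    by (auto simp: \<chi>_def override_on_def)
  have "conserving tail head H1 s m \<chi>" "conserving tail head H2 m t \<chi>"
    using \<chi>1(1) \<chi>2(1) by (simp_all add: on1 on2 cong: conserving_cong)
  moreover have "delta head H1 m \<chi> = w"
    using sp_conserving_inflow_target[OF H1 \<chi>1(1)] \<chi>1(2) by (simp add: on1 cong: delta_cong)
  moreover have "delta tail H2 m \<chi> = w"
    using \<chi>2(2) by (simp add: on2 cong: delta_cong)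
  moreover have "delta tail H1 s \<chi> = w"
    using \<chi>1(2) by (simp add: on1 cong: delta_cong)
  moreover have "arcwise_between (H1 \<union> H2) \<phi> \<psi> \<chi>"
    using \<chi>1(3) \<chi>2(3) by (auto simp: on1 on2)
  ultimately show "\<exists>\<chi>. conserving tail head (H1 \<union> H2) s t \<chi> \<and> delta tail (H1 \<union> H2) s \<chi> = w \<and>
      arcwise_between (H1 \<union> H2) \<phi> \<psi> \<chi>"
    by (intro exI[of _ \<chi>]) (simp add: iff origin)
qed

lemma split_between_sums:
  fixes a1 a2 b1 b2 w :: nat
  assumes "min (a1 + a2) (b1 + b2) \<le> w" "w \<le> max (a1 + a2) (b1 + b2)"
  obtains w1 w2 where "w = w1 + w2"
    and "min a1 b1 \<le> w1" "w1 \<le> max a1 b1" and "min a2 b2 \<le> w2" "w2 \<le> max a2 b2"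
proof
  define w1 where "w1 = min (max a1 b1) (w - min a2 b2)"
  show "w = w1 + (w - w1)" "min a1 b1 \<le> w1" "w1 \<le> max a1 b1"
    "min a2 b2 \<le> w - w1" "w - w1 \<le> max a2 b2"
    using assms unfolding w1_def by (auto simp: min_def max_def split: if_splits)
qed

lemma has_intermediate_flows_parallel:
  assumes H1: "sp tail head H1 s t" and H2: "sp tail head H2 s t"
    and pc: "parallel_comp tail head H1 s t H2 s t"
    and IV1: "has_intermediate_flows tail head H1 s t"
    and IV2: "has_intermediate_flows tail head H2 s t"
  shows "has_intermediate_flows tail head (H1 \<union> H2) s t"
  unfolding has_intermediate_flows_def
proof (intro allI impI)
  fix \<phi> \<psi> w
  assume \<phi>: "conserving tail head (H1 \<union> H2) s t \<phi>" and \<psi>: "conserving tail head (H1 \<union> H2) s t \<psi>"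
    and w: "min (delta tail (H1 \<union> H2) s \<phi>) (delta tail (H1 \<union> H2) s \<psi>) \<le> w"
      "w \<le> max (delta tail (H1 \<union> H2) s \<phi>) (delta tail (H1 \<union> H2) s \<psi>)"
  note disjoint = parallel_comp_facts(1)[OF pc]
  note iff = conserving_Un_iff[OF parallel_comp_facts(2)[OF pc]]
  note sum = delta_Un[OF sp_finite[OF H1] sp_finite[OF H2] disjoint]
  obtain w1 w2 where "w = w1 + w2"
    and w1: "min (delta tail H1 s \<phi>) (delta tail H1 s \<psi>) \<le> w1" "w1 \<le> max (delta tail H1 s \<phi>) (delta tail H1 s \<psi>)"
    and w2: "min (delta tail H2 s \<phi>) (delta tail H2 s \<psi>) \<le> w2" "w2 \<le> max (delta tail H2 s \<phi>) (delta tail H2 s \<psi>)"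
    using split_between_sums w unfolding sum by blast
  obtain \<chi>1 where \<chi>1: "conserving tail head H1 s t \<chi>1" "delta tail H1 s \<chi>1 = w1" "arcwise_between H1 \<phi> \<psi> \<chi>1"
    using has_intermediate_flowsD[OF IV1 _ _ w1] \<phi> \<psi> by (auto simp: iff)
  obtain \<chi>2 where \<chi>2: "conserving tail head H2 s t \<chi>2" "delta tail H2 s \<chi>2 = w2" "arcwise_between H2 \<phi> \<psi> \<chi>2"
    using has_intermediate_flowsD[OF IV2 _ _ w2] \<phi> \<psi> by (auto simp: iff)
  define \<chi> where "\<chi> = override_on \<chi>2 \<chi>1 H1"
  have on1: "e \<in> H1 \<Longrightarrow> \<chi> e = \<chi>1 e" and on2: "e \<in> H2 \<Longrightarrow> \<chi> e = \<chi>2 e" for e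
    using disjoint by (auto simp: \<chi>_def override_on_def)
  have "conserving tail head H1 s t \<chi>" "conserving tail head H2 s t \<chi>"
    using \<chi>1(1) \<chi>2(1) by (simp_all add: on1 on2 cong: conserving_cong)
  moreover have "delta tail H1 s \<chi> + delta tail H2 s \<chi> = w"
    using \<chi>1(2) \<chi>2(2) \<open>w = w1 + w2\<close> by (simp add: on1 on2 cong: delta_cong)
  moreover have "arcwise_between (H1 \<union> H2) \<phi> \<psi> \<chi>"
    using \<chi>1(3) \<chi>2(3) by (auto simp: on1 on2)
  ultimately show "\<exists>\<chi>. conserving tail head (H1 \<union> H2) s t \<chi> \<and> delta tail (H1 \<union> H2) s \<chi> = w \<and>
      arcwise_between (H1 \<union> H2) \<phi> \<psi> \<chi>"
    by (intro exI[of _ \<chi>]) (simp add: iff sum)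
qed

lemma sp_has_intermediate_flows: "sp tail head H s t \<Longrightarrow> has_intermediate_flows tail head H s t"
proof (induction rule: sp.induct)
  case (arc e s t)
  then show ?case by (rule has_intermediate_flows_arc)
next
  case (ser H1 s1 t1 H2 s2 t2)
  then have "s2 = t1" by (simp add: series_comp_def)
  with ser show ?case by (auto intro: has_intermediate_flows_series)
next
  case (par H1 s1 t1 H2 s2 t2)
  then have "s2 = s1" "t2 = t1" by (simp_all add: parallel_comp_def)
  with par show ?case by (auto intro: has_intermediate_flows_parallel)
qed

lemma conserving_add_eq_cancel:
  assumes "conserving tail head H s t f" and "conserving tail head H s t h" and "conserving tail head H s t h'"
    and sum_eq: "\<And>e. e \<in> H \<Longrightarrow> f e + f' e = h e + h' e"
  shows "conserving tail head H s t f'"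
  unfolding conserving_def
proof
  fix v assume "v \<in> verts tail head H - {s, t}"
  with assms(1-3) have "delta tail H v f = delta head H v f" "delta tail H v h = delta head H v h"
    "delta tail H v h' = delta head H v h'"
    unfolding conserving_def by blast+
  with delta_add_eq[of H f f' h h' tail v, OF sum_eq] delta_add_eq[of H f f' h h' head v, OF sum_eq]
  show "delta tail H v f' = delta head H v f'"
    by linarith
qed

lemma arcwise_between_le:
  "arcwise_between H f f' \<chi> \<Longrightarrow> \<forall>e\<in>H. f e \<le> b e \<Longrightarrow> \<forall>e\<in>H. f' e \<le> b e \<Longrightarrow> \<forall>e\<in>H. \<chi> e \<le> b e"
  by (fastforce simp: max_def split: if_splits)

lemma is_flow_st_balance_iff:
  assumes H: "sp tail head H s t"
  shows "is_flow tail head H u (st_balance s t d) f \<longleftrightarrow>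
    (\<forall>e\<in>H. f e \<le> u e) \<and> conserving tail head H s t f \<and> delta tail H s f = d"
proof -
  have "(\<forall>v\<in>verts tail head H. int (delta tail H v f) - int (delta head H v f) = st_balance s t d v)
    \<longleftrightarrow> conserving tail head H s t f \<and> delta tail H s f = d" (is "?balanced \<longleftrightarrow> _")
  proof
    assume ?balanced
    with sp_origin_in_verts[OF H] have "int (delta tail H s f) - int (delta head H s f) = int d"
      by (force simp: st_balance_def)
    moreover have "delta tail H v f = delta head H v f" if v: "v \<in> verts tail head H - {s, t}" for v
    proof -
      from \<open>?balanced\<close> v have "int (delta tail H v f) - int (delta head H v f) = st_balance s t d v"
        by blast
      with v show ?thesis by (simp add: st_balance_def)
    qed
    ultimately show "conserving tail head H s t f \<and> delta tail H s f = d"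
      by (simp add: conserving_def sp_inflow_origin[OF H])
  next
    assume flow: "conserving tail head H s t f \<and> delta tail H s f = d"
    with sp_conserving_inflow_target[OF H] have "delta head H t f = d" by simp
    with flow sp_origin_ne_target[OF H] show ?balanced
      by (auto simp: conserving_def st_balance_def sp_inflow_origin[OF H] sp_outflow_target[OF H])
  qed
  then show ?thesis
    unfolding is_flow_def int_delta[symmetric] by simp
qed

lemma sp_complementary_flows:
  assumes H: "sp tail head H s t"
    and f: "conserving tail head H s t f" "conserving tail head H s t f'"
    and w: "delta tail H s f \<le> w" "w \<le> delta tail H s f'"
  obtains \<chi> \<chi>' where "conserving tail head H s t \<chi>" "conserving tail head H s t \<chi>'"
    and "delta tail H s \<chi> = w" and "\<And>e. e \<in> H \<Longrightarrow> \<chi> e + \<chi>' e = f e + f' e"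
    and "arcwise_between H f f' \<chi>" "arcwise_between H f f' \<chi>'"
proof -
  obtain \<chi> where \<chi>: "conserving tail head H s t \<chi>" "delta tail H s \<chi> = w"
    and between: "arcwise_between H f f' \<chi>"
    using has_intermediate_flowsD[OF sp_has_intermediate_flows[OF H] f, of w] w by auto
  define \<chi>' where "\<chi>' = (\<lambda>e. f e + f' e - \<chi> e)"
  have sum_eq: "\<chi> e + \<chi>' e = f e + f' e" if "e \<in> H" for e
    using between[rule_format, OF that] unfolding \<chi>'_def by (auto simp: max_def split: if_splits)
  moreover have "conserving tail head H s t \<chi>'"
    using \<chi>(1) f sum_eq by (rule conserving_add_eq_cancel)
  moreover have "arcwise_between H f f' \<chi>'"
    using between unfolding \<chi>'_def by (auto simp: min_def max_def)
  ultimately show ?thesis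
    using that \<chi> between by blast
qed

lemma is_flow_parallel_parts:
  assumes H1: "sp tail head H1 s t" and H2: "sp tail head H2 s t"
    and pc: "parallel_comp tail head H1 s t H2 s t"
    and f: "is_flow tail head (H1 \<union> H2) u (st_balance s t d) f"
  shows "conserving tail head H1 s t f" and "conserving tail head H2 s t f"
    and "\<forall>e\<in>H1 \<union> H2. f e \<le> u e" and "delta tail H1 s f + delta tail H2 s f = d"
  using f by (simp_all add: is_flow_st_balance_iff[OF sp.par[OF H1 H2 pc]]
    conserving_Un_iff[OF parallel_comp_facts(2)[OF pc]]
    delta_Un[OF sp_finite[OF H1] sp_finite[OF H2] parallel_comp_facts(1)[OF pc]])

lemma flow_cost_add: "flow_cost H c (\<lambda>e. f e + f' e) = flow_cost H c f + flow_cost H c f'"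
  by (simp add: flow_cost_def distrib_left sum.distrib)

lemma flow_cost_add_eq:
  assumes "\<And>e. e \<in> H \<Longrightarrow> f e + f' e = h e + h' e"
  shows "flow_cost H c f + flow_cost H c f' = flow_cost H c h + flow_cost H c h'"
proof -
  have "flow_cost H c (\<lambda>e. f e + f' e) = flow_cost H c (\<lambda>e. h e + h' e)"
    unfolding flow_cost_def using assms by (intro sum.cong) auto
  then show ?thesis by (simp add: flow_cost_add)
qed

lemma flow_cost_override_on:
  assumes "finite H1" and "finite H2" and "H1 \<inter> H2 = {}"
  shows "flow_cost (H1 \<union> H2) c (override_on f g H2) = flow_cost H1 c f + flow_cost H2 c g"
  using assms unfolding flow_cost_def
  by (simp add: sum.union_disjoint disjoint_iff override_on_def cong: sum.cong)

lemma is_flow_parallel_override_on: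
  assumes H1: "sp tail head H1 s t" and H2: "sp tail head H2 s t"
    and pc: "parallel_comp tail head H1 s t H2 s t"
    and f: "is_flow tail head (H1 \<union> H2) u (st_balance s t d) f"
    and g: "conserving tail head H2 s t g" "\<forall>e\<in>H2. g e \<le> u e"
  shows "is_flow tail head (H1 \<union> H2) u (st_balance s t (delta tail H1 s f + delta tail H2 s g))
    (override_on f g H2)"
proof -
  note disjoint = parallel_comp_facts(1)[OF pc]
  note parts = is_flow_parallel_parts[OF H1 H2 pc f]
  have "conserving tail head H1 s t (override_on f g H2)"
    using parts(1) disjoint by (auto simp: disjoint_iff cong: conserving_cong)
  moreover have "conserving tail head H2 s t (override_on f g H2)"
    using g(1) by (simp cong: conserving_cong)
  moreover have "\<forall>e\<in>H1 \<union> H2. override_on f g H2 e \<le> u e"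
    using parts(3) g(2) by (auto simp: override_on_def)
  ultimately show ?thesis
    by (simp add: is_flow_st_balance_iff[OF sp.par[OF H1 H2 pc]]
      conserving_Un_iff[OF parallel_comp_facts(2)[OF pc]]
      delta_Un[OF sp_finite[OF H1] sp_finite[OF H2] disjoint]
      delta_override_on_in delta_override_on_out[OF disjoint])
qed

lemma exists_optimal_robust_flow:
  assumes "robust_flow tail head A Afix u s t d1 d2 f1 f2"
  shows "\<exists>g1 g2. optimal_robust_flow tail head A Afix u c s t d1 d2 g1 g2"
proof -
  obtain g where "robust_flow tail head A Afix u s t d1 d2 (fst g) (snd g)"
    and "\<forall>h. robust_flow tail head A Afix u s t d1 d2 (fst h) (snd h) \<longrightarrow>
      robust_cost A c (fst g) (snd g) \<le> robust_cost A c (fst h) (snd h)"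
    using ex_has_least_nat[where P = "\<lambda>g. robust_flow tail head A Afix u s t d1 d2 (fst g) (snd g)"
      and m = "\<lambda>g. robust_cost A c (fst g) (snd g)" and k = "(f1, f2)"] assms by auto
  then show ?thesis
    unfolding optimal_robust_flow_def by (metis fst_conv snd_conv)
qed

lemma optimal_robust_flow_if_cost_le:
  assumes "optimal_robust_flow tail head A Afix u c s t d1 d2 f1 f2"
    and "robust_flow tail head A Afix u s t d1 d2 g1 g2"
    and "robust_cost A c g1 g2 \<le> robust_cost A c f1 f2"
  shows "optimal_robust_flow tail head A Afix u c s t d1 d2 g1 g2"
  using assms unfolding optimal_robust_flow_def by (meson order_trans)

lemma optimal_robust_flow_swap:
  "optimal_robust_flow tail head A Afix u c s t d1 d2 f1 f2 \<longleftrightarrow>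
   optimal_robust_flow tail head A Afix u c s t d2 d1 f2 f1"
proof -
  have "robust_flow tail head A Afix u s t d1 d2 f1 f2 \<longleftrightarrow> robust_flow tail head A Afix u s t d2 d1 f2 f1"
    for f1 f2 by (auto simp: robust_flow_def)
  moreover have "robust_cost A c f1 f2 = robust_cost A c f2 f1" for f1 f2
    by (simp add: robust_cost_def max.commute)
  ultimately show ?thesis
    unfolding optimal_robust_flow_def by metis
qed

lemma optimal_robust_flow_parallel_replace:
  assumes H1: "sp tail head H1 s t" and H2: "sp tail head H2 s t"
    and pc: "parallel_comp tail head H1 s t H2 s t"
    and opt: "optimal_robust_flow tail head (H1 \<union> H2) Afix u c s t d1 d2 f1 f2"
    and g: "conserving tail head H2 s t g" "\<forall>e\<in>H2. g e \<le> u e" "\<forall>e\<in>Afix \<inter> H2. g e = f1 e"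
    and amount: "delta tail H1 s f1 + delta tail H2 s g = d2"
    and cost: "flow_cost H2 c g \<le> flow_cost H2 c f1"
  shows "optimal_robust_flow tail head (H1 \<union> H2) Afix u c s t d1 d2 f1 (override_on f1 g H2)"
proof (rule optimal_robust_flow_if_cost_le[OF opt])
  note disjoint = parallel_comp_facts(1)[OF pc]
  note cost_Un = flow_cost_override_on[OF sp_finite[OF H1] sp_finite[OF H2] disjoint]
  from opt have f1: "is_flow tail head (H1 \<union> H2) u (st_balance s t d1) f1"
    by (simp add: optimal_robust_flow_def robust_flow_def)
  with is_flow_parallel_override_on[OF H1 H2 pc f1 g(1,2)] g(3) amount
  show "robust_flow tail head (H1 \<union> H2) Afix u s t d1 d2 f1 (override_on f1 g H2)"
    by (auto simp: robust_flow_def override_on_def)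
  have "flow_cost (H1 \<union> H2) c (override_on f1 g H2) \<le> flow_cost (H1 \<union> H2) c f1"
    using cost_Un[of c f1 g] cost_Un[of c f1 f1] cost by (simp add: override_on_def)
  then show "robust_cost (H1 \<union> H2) c f1 (override_on f1 g H2) \<le> robust_cost (H1 \<union> H2) c f1 f2"
    by (simp add: robust_cost_def)
qed

lemma parallel_exchange:
  assumes H1: "sp tail head H1 s t" and H2: "sp tail head H2 s t"
    and pc: "parallel_comp tail head H1 s t H2 s t" and "d1 \<le> d2"
    and opt: "optimal_robust_flow tail head (H1 \<union> H2) Afix u c s t d1 d2 f1 f2"
    and less: "delta tail H1 s f2 < delta tail H1 s f1"
  shows "\<exists>g1 g2. optimal_robust_flow tail head (H1 \<union> H2) Afix u c s t d1 d2 g1 g2 \<and>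
    delta tail H1 s g1 \<le> delta tail H1 s g2 \<and> delta tail H2 s g1 \<le> delta tail H2 s g2"
proof -
  note out = delta_override_on_out[OF parallel_comp_facts(1)[OF pc]]
  from opt have "is_flow tail head (H1 \<union> H2) u (st_balance s t d1) f1"
    "is_flow tail head (H1 \<union> H2) u (st_balance s t d2) f2" and fixed: "\<forall>e\<in>Afix. f1 e = f2 e"
    by (simp_all add: optimal_robust_flow_def robust_flow_def)
  note parts1 = is_flow_parallel_parts[OF H1 H2 pc this(1)]
    and parts2 = is_flow_parallel_parts[OF H1 H2 pc this(2)]
  \<comment> \<open>chosen so that delta tail H1 s f1 + w = d2; then d1 \<le> d2 places w between the values of f1, f2 on H2\<close>
  define w where "w = delta tail H2 s f2 - (delta tail H1 s f1 - delta tail H1 s f2)"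
  have w: "delta tail H2 s f1 \<le> w" "w \<le> delta tail H2 s f2" "delta tail H1 s f1 + w = d2"
    using parts1(4) parts2(4) less \<open>d1 \<le> d2\<close> unfolding w_def by linarith+
  obtain \<chi> q where \<chi>: "conserving tail head H2 s t \<chi>" "delta tail H2 s \<chi> = w"
    and q: "conserving tail head H2 s t q" and sum_eq: "\<And>e. e \<in> H2 \<Longrightarrow> \<chi> e + q e = f1 e + f2 e"
    and between: "arcwise_between H2 f1 f2 \<chi>" "arcwise_between H2 f1 f2 q"
    using sp_complementary_flows[OF H2 parts1(2) parts2(2) w(1,2)] by blast
  have "\<forall>e\<in>H2. f1 e \<le> u e" "\<forall>e\<in>H2. f2 e \<le> u e"
    using parts1(3) parts2(3) by simp_all
  with arcwise_between_le[OF between(1)] arcwise_between_le[OF between(2)]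
  have bounded: "\<forall>e\<in>H2. \<chi> e \<le> u e" "\<forall>e\<in>H2. q e \<le> u e"
    by blast+
  have agree: "\<forall>e\<in>Afix \<inter> H2. \<chi> e = f1 e" "\<forall>e\<in>Afix \<inter> H2. q e = f2 e"
    using between fixed by force+
  have "delta tail H2 s \<chi> + delta tail H2 s q = delta tail H2 s f1 + delta tail H2 s f2"
    using sum_eq by (rule delta_add_eq)
  with w \<chi>(2) parts1(4) parts2(4) have q_total: "delta tail H1 s f2 + delta tail H2 s q = d1"
    and q_less: "delta tail H2 s q \<le> delta tail H2 s f2"
    by linarith+
  have "flow_cost H2 c \<chi> + flow_cost H2 c q = flow_cost H2 c f1 + flow_cost H2 c f2"
    using sum_eq by (rule flow_cost_add_eq)
  then consider "flow_cost H2 c \<chi> \<le> flow_cost H2 c f1" | "flow_cost H2 c q \<le> flow_cost H2 c f2"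
    by linarith
  then show ?thesis
  proof cases
    case 1
    from w(3) \<chi>(2) have "delta tail H1 s f1 + delta tail H2 s \<chi> = d2" by simp
    from this 1 have "optimal_robust_flow tail head (H1 \<union> H2) Afix u c s t d1 d2 f1 (override_on f1 \<chi> H2)"
      by (rule optimal_robust_flow_parallel_replace[OF H1 H2 pc opt \<chi>(1) bounded(1) agree(1)])
    with w(1) \<chi>(2) have "optimal_robust_flow tail head (H1 \<union> H2) Afix u c s t d1 d2 f1 (override_on f1 \<chi> H2) \<and>
      delta tail H2 s f1 \<le> delta tail H2 s (override_on f1 \<chi> H2)"
      by (simp add: delta_override_on_in)
    then show ?thesis
      by (metis out order_refl)
  next
    case 2
    from opt have "optimal_robust_flow tail head (H1 \<union> H2) Afix u c s t d2 d1 f2 f1"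
      by (simp add: optimal_robust_flow_swap)
    from optimal_robust_flow_parallel_replace[OF H1 H2 pc this q bounded(2) agree(2) q_total 2]
    have "optimal_robust_flow tail head (H1 \<union> H2) Afix u c s t d1 d2 (override_on f2 q H2) f2"
      by (simp add: optimal_robust_flow_swap)
    with q_less have "optimal_robust_flow tail head (H1 \<union> H2) Afix u c s t d1 d2 (override_on f2 q H2) f2 \<and>
      delta tail H2 s (override_on f2 q H2) \<le> delta tail H2 s f2"
      by (simp add: delta_override_on_in)
    then show ?thesis
      by (metis out order_refl)
  qed
qed

lemma parallel_optimal_robust_flow_monotone:
  assumes H1: "sp tail head H1 s t" and H2: "sp tail head H2 s t"
    and pc: "parallel_comp tail head H1 s t H2 s t" and d: "d1 \<le> d2"
    and opt: "optimal_robust_flow tail head (H1 \<union> H2) Afix u c s t d1 d2 f1 f2"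
  shows "\<exists>g1 g2. optimal_robust_flow tail head (H1 \<union> H2) Afix u c s t d1 d2 g1 g2 \<and>
    delta tail H1 s g1 \<le> delta tail H1 s g2 \<and> delta tail H2 s g1 \<le> delta tail H2 s g2"
proof -
  consider "delta tail H1 s f1 \<le> delta tail H1 s f2 \<and> delta tail H2 s f1 \<le> delta tail H2 s f2"
    | "delta tail H1 s f2 < delta tail H1 s f1" | "delta tail H2 s f2 < delta tail H2 s f1"
    by linarith
  then show ?thesis
  proof cases
    case 1
    with opt show ?thesis by blast
  next
    case 2
    show ?thesis by (rule parallel_exchange[OF H1 H2 pc d opt 2])
  next
    case 3
    have "parallel_comp tail head H2 s t H1 s t"
      using pc by (simp add: parallel_comp_def Int_commute)
    from parallel_exchange[OF H2 H1 this d _ 3] opt show ?thesis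
      by (simp add: Un_commute) blast
  qed
qed

lemma series_flow_deltas:
  assumes H1: "sp tail head H1 s m" and H2: "sp tail head H2 m t"
    and sc: "series_comp tail head H1 s m H2 m t"
    and f: "is_flow tail head (H1 \<union> H2) u (st_balance s t d) f"
  shows "delta tail H1 s f = d" and "delta tail H2 m f = d"
proof -
  from f have "conserving tail head (H1 \<union> H2) s t f" and total: "delta tail (H1 \<union> H2) s f = d"
    by (simp_all add: is_flow_st_balance_iff[OF sp.ser[OF H1 H2 sc]])
  then have "conserving tail head H1 s m f" and junction: "delta tail H2 m f = delta head H1 m f"
    by (simp_all add: conserving_series_iff[OF H1 H2 sc])
  show "delta tail H1 s f = d"
    using total by (simp add: series_delta_origin[OF H1 H2 sc])
  with sp_conserving_inflow_target[OF H1 \<open>conserving tail head H1 s m f\<close>] junction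
  show "delta tail H2 m f = d" by simp
qed

theorem mainTheorem15:
  fixes tail head :: "'a \<Rightarrow> 'v"
    and A A1 A2 Afix :: "'a set"
    and u c :: "'a \<Rightarrow> nat"
    and s t s1 t1 s2 t2 :: 'v
    and d1 d2 :: nat
  assumes G1: "sp tail head A1 s1 t1"
    and G2: "sp tail head A2 s2 t2"
    and comp: "(series_comp tail head A1 s1 t1 A2 s2 t2 \<and> s = s1 \<and> t = t2)
             \<or> (parallel_comp tail head A1 s1 t1 A2 s2 t2 \<and> s = s1 \<and> t = t1)"
    and GA: "A = A1 \<union> A2"
    and Afix_sub: "Afix \<subseteq> A"
    and d: "d1 \<le> d2"
    and ex: "\<exists>f1 f2. robust_flow tail head A Afix u s t d1 d2 f1 f2"
  shows "\<exists>f1 f2. optimal_robust_flow tail head A Afix u c s t d1 d2 f1 f2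
           \<and> delta tail A1 s1 f2 \<ge> delta tail A1 s1 f1
           \<and> delta tail A2 s2 f2 \<ge> delta tail A2 s2 f1"
proof -
  obtain f1 f2 where opt: "optimal_robust_flow tail head A Afix u c s t d1 d2 f1 f2"
    using ex exists_optimal_robust_flow[where c = c] by metis
  from comp show ?thesis
  proof (elim disjE conjE)
    assume sc: "series_comp tail head A1 s1 t1 A2 s2 t2" and "s = s1" "t = t2"
    then have "s2 = t1" by (simp add: series_comp_def)
    note deltas = series_flow_deltas[OF G1 G2[unfolded \<open>s2 = t1\<close>] sc[unfolded \<open>s2 = t1\<close>]]
    from opt have "is_flow tail head (A1 \<union> A2) u (st_balance s1 t2 d1) f1"
      "is_flow tail head (A1 \<union> A2) u (st_balance s1 t2 d2) f2"
      using GA \<open>s = s1\<close> \<open>t = t2\<close> by (simp_all add: optimal_robust_flow_def robust_flow_def)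
    then have "delta tail A1 s1 f1 = d1" "delta tail A2 s2 f1 = d1"
      "delta tail A1 s1 f2 = d2" "delta tail A2 s2 f2 = d2"
      using deltas \<open>s2 = t1\<close> by simp_all
    with opt d show ?thesis
      by (intro exI[of _ f1] exI[of _ f2]) simp
  next
    assume pc: "parallel_comp tail head A1 s1 t1 A2 s2 t2" and "s = s1" "t = t1"
    then have "s2 = s1" "t2 = t1" by (simp_all add: parallel_comp_def)
    with parallel_optimal_robust_flow_monotone[OF G1 _ _ d, of A2 Afix u c f1 f2] G2 pc opt GA
      \<open>s = s1\<close> \<open>t = t1\<close>
    show ?thesis by simp
  qed
qed

end
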